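(* Let $\Gamma$ be a Veldkamp $n$-gon ($n\ge2$), let $x,y$ be opposite vertices of $\Gamma$ and let $z\in\Gamma_y$. Then there exists a unique root $(x,\dots,z,y)$ from $x$ to $y$ whose penultimate vertex is $z$.
   Context: A graph is a pair $(V,E)$ with $E$ a set of $2$-element subsets of $V$; $\Gamma_v$ is the set of neighbors of $v$. An $s$-path is a sequence $(x_0,\dots,x_s)$ of vertices with consecutive vertices adjacent and $x_{i-2}\ne x_i$ for $i\in[2,s]$. A closed $s$-path is an $s$-path with $s\ge3$ whose first and last vertices coincide; an $s$-circuit is the subgraph determined by a closed $s$-path. An opposition relation on a set $X$ is a symmetric anti-reflexive relation; it is $k$-plump if for every $S\subseteq X$ with $|S|\le k$ some element of $X$ is related to all elements of $S$. A Veldkamp graph is a graph with a $2$-plump opposition relation $\equiv_v$ on $\Gamma_v$ for each vertex $v$. A path $(v_0,\dots,v_s)$ is straight if $v_{i-1}\equiv_{v_i}v_{i+1}$ for all $i\in[1,s-1]$; a circuit is straight if every path in it is straight. A Veldkamp $n$-gon ($n\ge2$) is a Veldkamp graph satisfying (VP1) connected and bipartite; (VP2) for each $k\in[1,n-1]$ each straight $k$-path is the unique straight path between its endpoints of length at most $k$; (VP3) every straight $(n+1)$-path lies in a straight $2n$-circuit. A root is a straight $n$-path; two vertices $x,y$ are opposite if there is a root from $x$ to $y$. *)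

theory Defs
  imports Main
begin

definition graph :: "'a set \<Rightarrow> 'a set set \<Rightarrow> bool" where
  "graph V E \<longleftrightarrow> (\<forall>e\<in>E. e \<subseteq> V \<and> card e = 2)"

definition nbrs :: "'a set set \<Rightarrow> 'a \<Rightarrow> 'a set" where
  "nbrs E v = {u. {v, u} \<in> E}"

definition opposition_rel :: "'a set \<Rightarrow> ('a \<Rightarrow> 'a \<Rightarrow> bool) \<Rightarrow> bool" where
  "opposition_rel X R \<longleftrightarrow> (\<forall>a b. R a b \<longrightarrow> a \<in> X \<and> b \<in> X)
      \<and> (\<forall>a b. R a b \<longrightarrow> R b a) \<and> (\<forall>a. \<not> R a a)"

definition plump :: "nat \<Rightarrow> 'a set \<Rightarrow> ('a \<Rightarrow> 'a \<Rightarrow> bool) \<Rightarrow> bool" where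
  "plump k X R \<longleftrightarrow> (\<forall>S. S \<subseteq> X \<and> finite S \<and> card S \<le> k \<longrightarrow> (\<exists>x\<in>X. \<forall>s\<in>S. R x s))"

text \<open>opp v a b means a is opposite b in Gamma_v.\<close>
definition veldkamp_graph :: "'a set \<Rightarrow> 'a set set \<Rightarrow> ('a \<Rightarrow> 'a \<Rightarrow> 'a \<Rightarrow> bool) \<Rightarrow> bool" where
  "veldkamp_graph V E opp \<longleftrightarrow> graph V E \<and>
     (\<forall>v\<in>V. opposition_rel (nbrs E v) (opp v) \<and> plump 2 (nbrs E v) (opp v))"

definition is_path :: "'a set \<Rightarrow> 'a set set \<Rightarrow> 'a list \<Rightarrow> bool" where
  "is_path V E xs \<longleftrightarrow> xs \<noteq> [] \<and> set xs \<subseteq> V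
     \<and> (\<forall>i. Suc i < length xs \<longrightarrow> {xs ! i, xs ! Suc i} \<in> E)
     \<and> (\<forall>i. i + 2 < length xs \<longrightarrow> xs ! i \<noteq> xs ! (i + 2))"

definition s_path :: "'a set \<Rightarrow> 'a set set \<Rightarrow> nat \<Rightarrow> 'a list \<Rightarrow> bool" where
  "s_path V E s xs \<longleftrightarrow> is_path V E xs \<and> length xs = s + 1"

definition straight :: "('a \<Rightarrow> 'a \<Rightarrow> 'a \<Rightarrow> bool) \<Rightarrow> 'a list \<Rightarrow> bool" where
  "straight opp xs \<longleftrightarrow> (\<forall>i. i + 2 < length xs \<longrightarrow> opp (xs ! (i + 1)) (xs ! i) (xs ! (i + 2)))"

definition closed_path :: "'a set \<Rightarrow> 'a set set \<Rightarrow> nat \<Rightarrow> 'a list \<Rightarrow> bool" where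
  "closed_path V E s xs \<longleftrightarrow> s_path V E s xs \<and> s \<ge> 3 \<and> hd xs = last xs"

definition path_edges :: "'a list \<Rightarrow> 'a set set" where
  "path_edges xs = {{xs ! i, xs ! Suc i} | i. Suc i < length xs}"

definition straight_circuit :: "('a \<Rightarrow> 'a \<Rightarrow> 'a \<Rightarrow> bool) \<Rightarrow> 'a list \<Rightarrow> bool" where
  "straight_circuit opp c \<longleftrightarrow> (\<forall>q. is_path (set c) (path_edges c) q \<longrightarrow> straight opp q)"

definition connected_graph :: "'a set \<Rightarrow> 'a set set \<Rightarrow> bool" where
  "connected_graph V E \<longleftrightarrow> (\<forall>x\<in>V. \<forall>y\<in>V. \<exists>w. w \<noteq> [] \<and> set w \<subseteq> V \<and> hd w = x \<and> last w = y
       \<and> (\<forall>i. Suc i < length w \<longrightarrow> {w ! i, w ! Suc i} \<in> E))"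

definition bipartite :: "'a set \<Rightarrow> 'a set set \<Rightarrow> bool" where
  "bipartite V E \<longleftrightarrow> (\<exists>f :: 'a \<Rightarrow> bool. \<forall>u\<in>V. \<forall>v\<in>V. {u, v} \<in> E \<longrightarrow> f u \<noteq> f v)"

definition veldkamp_ngon :: "nat \<Rightarrow> 'a set \<Rightarrow> 'a set set \<Rightarrow> ('a \<Rightarrow> 'a \<Rightarrow> 'a \<Rightarrow> bool) \<Rightarrow> bool" where
  "veldkamp_ngon n V E opp \<longleftrightarrow> n \<ge> 2 \<and> veldkamp_graph V E opp
     \<and> connected_graph V E \<and> bipartite V E
     \<and> (\<forall>k p. 1 \<le> k \<and> k \<le> n - 1 \<and> s_path V E k p \<and> straight opp p \<longrightarrow>
           (\<forall>q. is_path V E q \<and> straight opp q \<and> length q \<le> k + 1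
                \<and> hd q = hd p \<and> last q = last p \<longrightarrow> q = p))
     \<and> (\<forall>p. s_path V E (n + 1) p \<and> straight opp p \<longrightarrow>
           (\<exists>c. closed_path V E (2 * n) c \<and> straight_circuit opp c
                \<and> is_path (set c) (path_edges c) p))"

definition root :: "nat \<Rightarrow> 'a set \<Rightarrow> 'a set set \<Rightarrow> ('a \<Rightarrow> 'a \<Rightarrow> 'a \<Rightarrow> bool) \<Rightarrow> 'a list \<Rightarrow> bool" where
  "root n V E opp p \<longleftrightarrow> s_path V E n p \<and> straight opp p"

definition opposite :: "nat \<Rightarrow> 'a set \<Rightarrow> 'a set set \<Rightarrow> ('a \<Rightarrow> 'a \<Rightarrow> 'a \<Rightarrow> bool) \<Rightarrow> 'a \<Rightarrow> 'a \<Rightarrow> bool" where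
  "opposite n V E opp x y \<longleftrightarrow> (\<exists>p. root n V E opp p \<and> hd p = x \<and> last p = y)"

end

(*
  Start from any root (x, ..., p, y). If p <> z, 2-plumpness of the opposition relation
  at y yields w opposite both p and z. Appending w gives a straight (n+1)-path, which by
  (VP3) lies in a straight 2n-circuit; walking from x the other way round that circuit
  gives a root from x to y through w. Repeating the turn from w to z produces the
  required root. Two roots with the same ends and the same penultimate vertex lose their
  last vertex to straight (n-1)-paths with the same ends, which coincide by (VP2).

  The substance lies in the circuit: (VP2) shows that a straight 2n-circuit repeats no
  vertex within distance n, so it is a genuine cycle and every path in it runs around
  it in one direction only.
*)
theory Submission
  imports Defs
begin

lemma veldkamp_ngon_ge_2: "veldkamp_ngon n V E opp \<Longrightarrow> 2 \<le> n"
  unfolding veldkamp_ngon_def by simp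

lemma veldkamp_ngon_graph: "veldkamp_ngon n V E opp \<Longrightarrow> graph V E"
  unfolding veldkamp_ngon_def veldkamp_graph_def by simp

lemma veldkamp_ngon_local:
  "veldkamp_ngon n V E opp \<Longrightarrow> v \<in> V \<Longrightarrow> opposition_rel (nbrs E v) (opp v) \<and> plump 2 (nbrs E v) (opp v)"
  unfolding veldkamp_ngon_def veldkamp_graph_def by simp

lemma veldkamp_ngon_straight_path_unique:
  assumes "veldkamp_ngon n V E opp" "1 \<le> k" "k \<le> n - 1" "s_path V E k p" "straight opp p"
    "is_path V E q" "straight opp q" "length q \<le> k + 1" "hd q = hd p" "last q = last p"
  shows "q = p"
  using assms unfolding veldkamp_ngon_def by blast

lemma veldkamp_ngon_straight_path_in_circuit:
  assumes "veldkamp_ngon n V E opp" "s_path V E (n + 1) p" "straight opp p"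
  obtains c where "closed_path V E (2 * n) c" "straight_circuit opp c" "is_path (set c) (path_edges c) p"
  using assms unfolding veldkamp_ngon_def by blast

lemma graph_edge_neq: "graph V E \<Longrightarrow> {u, v} \<in> E \<Longrightarrow> u \<noteq> v"
  unfolding graph_def by fastforce

lemma is_path_mono: "is_path A B q \<Longrightarrow> A \<subseteq> V \<Longrightarrow> B \<subseteq> E \<Longrightarrow> is_path V E q"
  unfolding is_path_def by blast

lemma path_edges_subset: "is_path V E c \<Longrightarrow> path_edges c \<subseteq> E"
  unfolding is_path_def path_edges_def by auto

lemma is_path_map_upt:
  assumes "1 \<le> m"
    and "\<And>k. Suc k < m \<Longrightarrow> {h k, h (Suc k)} \<in> E"
    and "\<And>k. k < m \<Longrightarrow> h k \<in> V"
    and "\<And>k. k + 2 < m \<Longrightarrow> h k \<noteq> h (k + 2)"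
  shows "is_path V E (map h [0..<m])"
  using assms unfolding is_path_def by (auto simp: nth_map)

lemma is_path_rev:
  assumes "is_path V E p" shows "is_path V E (rev p)"
  unfolding is_path_def
proof (intro conjI allI impI)
  show "rev p \<noteq> []" "set (rev p) \<subseteq> V" using assms unfolding is_path_def by auto
next
  fix i assume i: "Suc i < length (rev p)"
  then have "{p ! (length p - Suc (Suc i)), p ! Suc (length p - Suc (Suc i))} \<in> E"
    using assms unfolding is_path_def by simp
  moreover have "Suc (length p - Suc (Suc i)) = length p - Suc i" using i by simp
  ultimately show "{rev p ! i, rev p ! Suc i} \<in> E"
    using i by (simp add: rev_nth insert_commute)
next
  fix i assume i: "i + 2 < length (rev p)"
  then have "p ! (length p - Suc (i + 2)) \<noteq> p ! (length p - Suc (i + 2) + 2)"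
    using assms unfolding is_path_def by simp
  moreover have "length p - Suc (i + 2) + 2 = length p - Suc i" using i by simp
  ultimately show "rev p ! i \<noteq> rev p ! (i + 2)"
    using i by (simp add: rev_nth)
qed

lemma is_path_butlast:
  "is_path V E p \<Longrightarrow> 2 \<le> length p \<Longrightarrow> is_path V E (butlast p)"
  unfolding is_path_def by (auto simp: nth_butlast dest: in_set_butlastD arg_cong[of _ _ length])

lemma straight_butlast: "straight opp p \<Longrightarrow> straight opp (butlast p)"
  unfolding straight_def by (auto simp: nth_butlast)

lemma is_path_snoc:
  assumes p: "is_path V E p" and "2 \<le> length p"
    and "{last p, w} \<in> E" "w \<in> V" "p ! (length p - 2) \<noteq> w"
  shows "is_path V E (p @ [w])"
proof -
  have last: "last p = p ! (length p - 1)" using p unfolding is_path_def by (simp add: last_conv_nth)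
  have "Suc i < length p \<Longrightarrow> {p ! i, p ! Suc i} \<in> E" "i + 2 < length p \<Longrightarrow> p ! i \<noteq> p ! (i + 2)" for i
    using p unfolding is_path_def by blast+
  with assms show ?thesis
    unfolding is_path_def last by (auto simp: nth_append less_Suc_eq numeral_2_eq_2 dest: sym[of "Suc _" "length p"])
qed

lemma straight_snoc:
  assumes "straight opp p" "2 \<le> length p" "opp (last p) (p ! (length p - 2)) w"
  shows "straight opp (p @ [w])"
proof -
  have "last p = p ! (length p - 1)" using assms(2) by (cases p) (auto simp: last_conv_nth)
  with assms show ?thesis unfolding straight_def
    by (auto simp: nth_append less_Suc_eq numeral_2_eq_2 dest: sym[of "Suc _" "length p"])
qed

locale ngon_straight_circuit =
  fixes n :: nat and V :: "'a set" and E :: "'a set set"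
    and opp :: "'a \<Rightarrow> 'a \<Rightarrow> 'a \<Rightarrow> bool" and c :: "'a list"
  assumes ngon: "veldkamp_ngon n V E opp"
    and closed: "closed_path V E (2 * n) c"
    and straight_circ: "straight_circuit opp c"
begin

abbreviation path_in_circuit :: "'a list \<Rightarrow> bool" where
  "path_in_circuit q \<equiv> is_path (set c) (path_edges c) q"

lemma n_ge_2: "2 \<le> n"
  using veldkamp_ngon_ge_2[OF ngon] .

lemma circuit_is_path: "is_path V E c" and length_circuit: "length c = 2 * n + 1"
  using closed unfolding closed_path_def s_path_def by auto

lemma circuit_closes: "c ! (2 * n) = c ! 0"
proof -
  have "c \<noteq> []" using length_circuit by auto
  then show ?thesis
    using closed length_circuit unfolding closed_path_def by (simp add: hd_conv_nth last_conv_nth)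
qed

lemma circuit_edge: "i < 2 * n \<Longrightarrow> {c ! i, c ! Suc i} \<in> path_edges c"
  using length_circuit unfolding path_edges_def by auto

lemma circuit_no_backtrack: "i + 2 \<le> 2 * n \<Longrightarrow> c ! i \<noteq> c ! (i + 2)"
  using circuit_is_path length_circuit unfolding is_path_def by simp

lemma path_in_circuit_straight: "path_in_circuit q \<Longrightarrow> straight opp q"
  using straight_circ unfolding straight_circuit_def by blast

lemma path_in_circuit_is_path: "path_in_circuit q \<Longrightarrow> is_path V E q"
  using circuit_is_path path_edges_subset is_path_mono unfolding is_path_def by blast

text \<open>The path condition on c excludes backtracking only inside the list, not across
  the base point c ! 0 = c ! (2 * n); (VP2) applied to the two halves of c excludes it there.\<close>
lemma circuit_no_backtrack_at_base: "c ! (2 * n - 1) \<noteq> c ! 1"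
proof
  assume base: "c ! (2 * n - 1) = c ! 1"
  have arc: "path_in_circuit (map (\<lambda>k. c ! (i + k)) [0..<m])" if "1 \<le> m" "i + m \<le> 2 * n + 1" for i m
  proof (rule is_path_map_upt)
    show "{c ! (i + k), c ! (i + Suc k)} \<in> path_edges c" if "Suc k < m" for k
      using circuit_edge[of "i + k"] that \<open>i + m \<le> 2 * n + 1\<close> by simp
    show "c ! (i + k) \<in> set c" if "k < m" for k
      using that \<open>i + m \<le> 2 * n + 1\<close> length_circuit by simp
    show "c ! (i + k) \<noteq> c ! (i + (k + 2))" if "k + 2 < m" for k
      using circuit_no_backtrack[of "i + k"] that \<open>i + m \<le> 2 * n + 1\<close> by (simp add: add.assoc)
  qed (fact that)
  define p where "p = map (\<lambda>k. c ! (1 + k)) [0..<n]"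
  define q where "q = rev (map (\<lambda>k. c ! (n + k)) [0..<n])"
  have n: "2 \<le> n" by (rule n_ge_2)
  have p: "path_in_circuit p" unfolding p_def using n by (intro arc) auto
  have q: "path_in_circuit q" unfolding q_def using n by (intro arc is_path_rev) auto
  have "q = p"
  proof (rule veldkamp_ngon_straight_path_unique[OF ngon, of "n - 1"])
    show "s_path V E (n - 1) p" unfolding s_path_def
      using path_in_circuit_is_path[OF p] n by (simp add: p_def)
    show "hd q = hd p" "last q = last p"
      using n base by (simp_all add: p_def q_def hd_map last_map hd_rev last_rev mult_2)
  qed (use n p q path_in_circuit_straight path_in_circuit_is_path in \<open>auto simp: q_def\<close>)
  then have "q ! (n - 2) = p ! (n - 2)" by simp
  moreover have "Suc (n - 2) = n - 1" using n by simp
  ultimately have "c ! (n + 1) = c ! (n - 1)"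
    using n by (simp add: p_def q_def rev_nth)
  moreover have "c ! (n - 1) \<noteq> c ! (n - 1 + 2)" using n by (intro circuit_no_backtrack) simp
  ultimately show False using n by simp
qed

definition cyc :: "int \<Rightarrow> 'a" where
  "cyc i = c ! nat (i mod int (2 * n))"

lemma cyc_cong: "i mod int (2 * n) = j mod int (2 * n) \<Longrightarrow> cyc i = cyc j"
  unfolding cyc_def by simp

lemma cyc_of_nat: "j \<le> 2 * n \<Longrightarrow> cyc (int j) = c ! j"
proof (cases "j = 2 * n")
  case True
  then show ?thesis using circuit_closes unfolding cyc_def by simp
next
  case False
  moreover assume "j \<le> 2 * n"
  ultimately show ?thesis unfolding cyc_def by (simp flip: of_nat_mod)
qed

lemma cyc_shift:
  obtains j where "j < 2 * n" "\<And>k. cyc (i + int k) = cyc (int (j + k))"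
proof
  have pos: "0 < int (2 * n)" using n_ge_2 by simp
  show "nat (i mod int (2 * n)) < 2 * n" using pos by (simp add: nat_less_iff)
  show "cyc (i + int k) = cyc (int (nat (i mod int (2 * n)) + k))" for k
    using pos by (intro cyc_cong) (simp add: mod_add_left_eq)
qed

lemma cyc_edge: "{cyc i, cyc (i + 1)} \<in> path_edges c"
proof -
  obtain j where j: "j < 2 * n" "\<And>k. cyc (i + int k) = cyc (int (j + k))" using cyc_shift[of i] by blast
  have "cyc i = c ! j" "cyc (i + 1) = c ! Suc j"
    using j(2)[of 0] j(2)[of 1] j(1) cyc_of_nat[of j] cyc_of_nat[of "Suc j"] by simp_all
  then show ?thesis using circuit_edge[OF j(1)] by simp
qed

lemma cyc_no_backtrack: "cyc i \<noteq> cyc (i + 2)"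
proof -
  obtain j where j: "j < 2 * n" "\<And>k. cyc (i + int k) = cyc (int (j + k))" using cyc_shift[of i] by blast
  have i: "cyc i = c ! j" and i2: "cyc (i + 2) = cyc (int (j + 2))"
    using j(2)[of 0] j(2)[of 2] j(1) by (simp_all add: cyc_of_nat)
  show ?thesis
  proof (cases "j + 2 \<le> 2 * n")
    case True
    then show ?thesis using i i2 circuit_no_backtrack cyc_of_nat[of "j + 2"] by simp
  next
    case False
    then have "j = 2 * n - 1" using j(1) by simp
    moreover have "cyc (int (j + 2)) = cyc 1" using \<open>j = 2 * n - 1\<close> n_ge_2 by (intro cyc_cong) simp
    ultimately show ?thesis
      using i i2 circuit_no_backtrack_at_base cyc_of_nat[of 1] n_ge_2 by simp
  qed
qed

lemma set_circuit: "set c = range cyc"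
proof
  show "set c \<subseteq> range cyc"
  proof
    fix u assume "u \<in> set c"
    then obtain j where "j \<le> 2 * n" "u = c ! j" using length_circuit by (auto simp: in_set_conv_nth less_Suc_eq_le)
    then show "u \<in> range cyc" by (metis cyc_of_nat rangeI)
  qed
  have "nat (i mod int (2 * n)) < 2 * n" for i using n_ge_2 by (simp add: nat_less_iff)
  then show "range cyc \<subseteq> set c"
    using length_circuit unfolding cyc_def by (auto intro!: nth_mem simp: less_Suc_eq)
qed

lemma path_edges_circuit: "path_edges c = range (\<lambda>i. {cyc i, cyc (i + 1)})"
proof
  show "path_edges c \<subseteq> range (\<lambda>i. {cyc i, cyc (i + 1)})"
  proof
    fix e assume "e \<in> path_edges c"
    then obtain j where "e = {c ! j, c ! Suc j}" "j < 2 * n"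
      using length_circuit unfolding path_edges_def by auto
    then have "e = {cyc (int j), cyc (int j + 1)}"
      using cyc_of_nat[of j] cyc_of_nat[of "Suc j"] by (simp add: add.commute)
    then show "e \<in> range (\<lambda>i. {cyc i, cyc (i + 1)})" by blast
  qed
qed (use cyc_edge in blast)


lemma cyc_arc_in_circuit:
  assumes d: "d \<in> {1, -1}" and m: "1 \<le> m"
  shows "path_in_circuit (map (\<lambda>k. cyc (a + d * int k)) [0..<m])"
proof (rule is_path_map_upt[OF m])
  fix k
  from d consider "d = 1" | "d = -1" by blast
  then show "{cyc (a + d * int k), cyc (a + d * int (Suc k))} \<in> path_edges c"
  proof cases
    case 1
    then show ?thesis using cyc_edge[of "a + int k"] by (simp add: algebra_simps)
  next
    case 2
    then show ?thesis using cyc_edge[of "a - int k - 1"] by (simp add: insert_commute algebra_simps)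
  qed
  show "cyc (a + d * int k) \<in> set c" by (simp add: set_circuit)
  from d consider "d = 1" | "d = -1" by blast
  then show "cyc (a + d * int k) \<noteq> cyc (a + d * int (k + 2))"
  proof cases
    case 1
    then show ?thesis using cyc_no_backtrack[of "a + int k"] by (simp add: algebra_simps)
  next
    case 2
    then show ?thesis using cyc_no_backtrack[of "a - int k - 2"] by (simp add: algebra_simps)
  qed
qed

lemma cyc_reflect: "m + m' = 2 * n \<Longrightarrow> cyc (s - d * int m) = cyc (s + d * int m')"
proof (rule cyc_cong)
  assume "m + m' = 2 * n"
  then have "int m' = int (2 * n) - int m" by simp
  then have "s + d * int m' = (s - d * int m) + d * int (2 * n)" by (simp add: right_diff_distrib)
  then show "(s - d * int m) mod int (2 * n) = (s + d * int m') mod int (2 * n)" by (metis mod_mult_self1)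
qed

text \<open>For m \<ge> 3 the arc from a + 1 to a + m and the edge from a + 1 back to a would be
  distinct straight paths of length at most n - 1 with the same ends.\<close>
lemma cyc_ne_within_n:
  assumes "1 \<le> m" "m \<le> n"
  shows "cyc a \<noteq> cyc (a + int m)"
proof
  assume eq: "cyc a = cyc (a + int m)"
  consider (edge) "m = 1" | (backtrack) "m = 2" | (long) "3 \<le> m" using assms(1) by linarith
  then show False
  proof cases
    case edge
    have "{cyc a, cyc (a + 1)} \<in> E" using cyc_edge circuit_is_path path_edges_subset by blast
    then have "cyc a \<noteq> cyc (a + 1)" by (rule graph_edge_neq[OF veldkamp_ngon_graph[OF ngon]])
    then show False using eq edge by simp
  next
    case backtrack
    then show False using eq cyc_no_backtrack[of a] by simp
  next
    case long
    define long_arc where "long_arc = map (\<lambda>k. cyc (a + 1 + 1 * int k)) [0..<m]"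
    define short_arc where "short_arc = map (\<lambda>k. cyc (a + 1 + (-1) * int k)) [0..<2]"
    have long_arc_path: "path_in_circuit long_arc"
      unfolding long_arc_def by (rule cyc_arc_in_circuit) (use long in auto)
    have short_arc_path: "path_in_circuit short_arc"
      unfolding short_arc_def by (rule cyc_arc_in_circuit) auto
    have "short_arc = long_arc"
    proof (rule veldkamp_ngon_straight_path_unique[OF ngon, of "m - 1"])
      show "s_path V E (m - 1) long_arc" unfolding s_path_def
        using path_in_circuit_is_path[OF long_arc_path] long by (simp add: long_arc_def)
      have "a + 1 + int (m - 1) = a + int m" using long by simp
      then show "last short_arc = last long_arc" using eq long by (simp add: long_arc_def short_arc_def last_map)
    qed (use long assms long_arc_path short_arc_path path_in_circuit_straight path_in_circuit_is_path in
         \<open>auto simp: long_arc_def short_arc_def hd_map upt_conv_Cons\<close>)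
    then have "length short_arc = length long_arc" by simp
    then show False using long by (simp add: long_arc_def short_arc_def)
  qed
qed

lemma cyc_eq_iff: "cyc a = cyc b \<longleftrightarrow> a mod int (2 * n) = b mod int (2 * n)"
proof
  assume eq: "cyc a = cyc b"
  define r where "r = (b - a) mod int (2 * n)"
  have r: "0 \<le> r" "r < int (2 * n)" using n_ge_2 unfolding r_def by auto
  have "(a + r) mod int (2 * n) = b mod int (2 * n)" unfolding r_def
    by (metis add.commute diff_add_cancel mod_add_right_eq)
  then have b: "cyc b = cyc (a + r)" by (intro cyc_cong) simp
  show "a mod int (2 * n) = b mod int (2 * n)"
  proof (cases "r = 0")
    case True
    then show ?thesis using \<open>(a + r) mod int (2 * n) = b mod int (2 * n)\<close> by simp
  next
    case False
    show ?thesis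
    proof (cases "r \<le> int n")
      case True
      have "cyc a \<noteq> cyc (a + int (nat r))" using True r \<open>r \<noteq> 0\<close> by (intro cyc_ne_within_n) auto
      then show ?thesis using r eq b by simp
    next
      case False
      have "cyc (a + r) \<noteq> cyc (a + r + int (nat (int (2 * n) - r)))"
        using False r by (intro cyc_ne_within_n) auto
      moreover have "cyc (a + r + int (nat (int (2 * n) - r))) = cyc a"
        using r by (intro cyc_cong) simp
      ultimately show ?thesis using eq b by simp
    qed
  qed
qed (rule cyc_cong)

lemma cyc_neighbour:
  assumes "{cyc a, v} \<in> path_edges c"
  shows "v = cyc (a + 1) \<or> v = cyc (a - 1)"
proof -
  obtain i where "{cyc a, v} = {cyc i, cyc (i + 1)}" using assms by (auto simp: path_edges_circuit)
  then consider "cyc a = cyc i" "v = cyc (i + 1)" | "cyc a = cyc (i + 1)" "v = cyc i"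
    by (auto simp: doubleton_eq_iff)
  then show ?thesis
  proof cases
    case 1
    then have "cyc (a + 1) = cyc (i + 1)" by (metis cyc_eq_iff mod_add_left_eq)
    then show ?thesis using 1 by simp
  next
    case 2
    then have "cyc (a - 1) = cyc i" by (metis cyc_eq_iff mod_diff_left_eq add_diff_cancel_right')
    then show ?thesis using 2 by simp
  qed
qed

lemma path_in_circuit_winds:
  assumes P: "path_in_circuit P" and len: "2 \<le> length P"
  obtains s d where "d \<in> {1, -1}" "\<And>k. k < length P \<Longrightarrow> P ! k = cyc (s + d * int k)"
proof -
  have edge: "{P ! k, P ! Suc k} \<in> path_edges c" if "Suc k < length P" for k
    using P that unfolding is_path_def by blast
  have "P ! 0 \<in> set c" using P len unfolding is_path_def by auto
  then obtain s where s: "P ! 0 = cyc s" by (auto simp: set_circuit)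
  then have "P ! 1 = cyc (s + 1) \<or> P ! 1 = cyc (s + -1)"
    using cyc_neighbour edge[of 0] len by simp
  then obtain d where d: "d \<in> {1, -1}" "P ! 1 = cyc (s + d)" by blast
  have "P ! k = cyc (s + d * int k) \<and> P ! Suc k = cyc (s + d * int (Suc k))" if "Suc k < length P" for k
    using that
  proof (induction k)
    case 0
    then show ?case using s d by simp
  next
    case (Suc k)
    then have k: "P ! Suc k = cyc (s + d * int (Suc k))" "P ! k = cyc (s + d * int k)" by simp_all
    have "P ! Suc (Suc k) = cyc (s + d * int (Suc k) + 1) \<or> P ! Suc (Suc k) = cyc (s + d * int (Suc k) - 1)"
      using cyc_neighbour edge[of "Suc k"] Suc.prems k by simp
    moreover have "P ! Suc (Suc k) \<noteq> P ! k"
      using P Suc.prems unfolding is_path_def by (metis add_2_eq_Suc')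
    moreover have "{cyc (s + d * int (Suc k) + 1), cyc (s + d * int (Suc k) - 1)}
        = {cyc (s + d * int k), cyc (s + d * int (Suc (Suc k)))}"
      using d(1) by (auto simp: algebra_simps)
    ultimately show ?case using k by auto
  qed
  then have "P ! k = cyc (s + d * int k)" if "k < length P" for k
    using that len by (cases k) auto
  with d(1) show thesis by (rule that)
qed

text \<open>Walk from P ! 0 around the circuit against the direction of P: after n steps one
  is at P ! n, and one step earlier at P ! (n + 1).\<close>
lemma root_around_circuit:
  assumes P: "path_in_circuit P" and len: "length P = n + 2"
  shows "\<exists>R. root n V E opp R \<and> hd R = hd P \<and> last R = P ! n \<and> R ! (n - 1) = P ! (n + 1)"
proof -
  have "2 \<le> length P" using len by simp
  with P obtain d s where d: "d \<in> {1, -1}" and P_cyc: "\<And>k. k < length P \<Longrightarrow> P ! k = cyc (s + d * int k)"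
    by (rule path_in_circuit_winds) (rule that)
  define R where "R = map (\<lambda>k. cyc (s + (- d) * int k)) [0..<n + 1]"
  have R: "path_in_circuit R" unfolding R_def using d by (intro cyc_arc_in_circuit) auto
  have "length R = n + 1" by (simp add: R_def)
  then have "root n V E opp R"
    unfolding root_def s_path_def using path_in_circuit_is_path[OF R] path_in_circuit_straight[OF R] by blast
  moreover have "hd R = hd P"
    using P_cyc[of 0] len by (cases P) (simp_all add: R_def hd_map del: upt_Suc)
  moreover have "last R = P ! n"
    using P_cyc[of n] len cyc_reflect[of n n] by (simp add: R_def last_map)
  moreover have "R ! (n - 1) = P ! (n + 1)"
  proof -
    have "[0..<n + 1] ! (n - 1) = n - 1" using n_ge_2 by (simp del: upt_Suc)
    then show ?thesis
      using P_cyc[of "n + 1"] len cyc_reflect[of "n - 1" "n + 1"] n_ge_2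
      by (simp add: R_def del: upt_Suc)
  qed
  ultimately show ?thesis by blast
qed

end

lemma root_other_way_around:
  assumes ngon: "veldkamp_ngon n V E opp" and "s_path V E (n + 1) P" "straight opp P"
  shows "\<exists>R. root n V E opp R \<and> hd R = hd P \<and> last R = P ! n \<and> R ! (n - 1) = P ! (n + 1)"
proof -
  obtain c where "closed_path V E (2 * n) c" "straight_circuit opp c" "is_path (set c) (path_edges c) P"
    using veldkamp_ngon_straight_path_in_circuit[OF assms] .
  then interpret ngon_straight_circuit n V E opp c using ngon by unfold_locales
  show ?thesis using root_around_circuit \<open>path_in_circuit P\<close> \<open>s_path V E (n + 1) P\<close>
    unfolding s_path_def by simp
qed

lemma root_turn_penultimate:
  assumes ngon: "veldkamp_ngon n V E opp" and p: "root n V E opp p"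
    and w: "w \<in> nbrs E (last p)" and opp_w: "opp (last p) (p ! (n - 1)) w"
  shows "\<exists>R. root n V E opp R \<and> hd R = hd p \<and> last R = last p \<and> R ! (n - 1) = w"
proof -
  have n: "2 \<le> n" using veldkamp_ngon_ge_2[OF ngon] .
  have len: "length p = n + 1" and p_path: "is_path V E p" and p_straight: "straight opp p"
    using p unfolding root_def s_path_def by auto
  have last: "last p = p ! n" using len by (cases p) (auto simp: last_conv_nth)
  have "last p \<in> V" using p_path len last unfolding is_path_def by auto
  then have "opposition_rel (nbrs E (last p)) (opp (last p))"
    using veldkamp_ngon_local[OF ngon] by blast
  then have "p ! (n - 1) \<noteq> w" using opp_w unfolding opposition_rel_def by metis
  moreover have edge: "{last p, w} \<in> E" using w unfolding nbrs_def by simp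
  moreover from edge have "w \<in> V" using veldkamp_ngon_graph[OF ngon] unfolding graph_def by blast
  ultimately have "s_path V E (n + 1) (p @ [w])" "straight opp (p @ [w])"
    using is_path_snoc[OF p_path] straight_snoc[OF p_straight] opp_w len n
    unfolding s_path_def by simp_all
  then obtain R where "root n V E opp R" "hd R = hd (p @ [w])"
      "last R = (p @ [w]) ! n" "R ! (n - 1) = (p @ [w]) ! (n + 1)"
    using root_other_way_around[OF ngon] by blast
  moreover have "hd (p @ [w]) = hd p" using len by (cases p) auto
  ultimately show ?thesis using len last by (auto simp: nth_append)
qed

lemma root_with_penultimate_exists:
  assumes ngon: "veldkamp_ngon n V E opp" and p: "root n V E opp p" and z: "z \<in> nbrs E (last p)"
  shows "\<exists>R. root n V E opp R \<and> hd R = hd p \<and> last R = last p \<and> R ! (n - 1) = z"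
proof -
  have n: "2 \<le> n" using veldkamp_ngon_ge_2[OF ngon] .
  have len: "length p = n + 1" and p_path: "is_path V E p"
    using p unfolding root_def s_path_def by auto
  have last: "last p = p ! n" using len by (cases p) (auto simp: last_conv_nth)
  have "Suc (n - 1) < length p" using len n by simp
  then have "{p ! (n - 1), p ! Suc (n - 1)} \<in> E" using p_path unfolding is_path_def by blast
  then have pen: "p ! (n - 1) \<in> nbrs E (last p)"
    using n last unfolding nbrs_def by (simp add: insert_commute)
  have "last p \<in> V" using p_path len last unfolding is_path_def by auto
  then have rel: "opposition_rel (nbrs E (last p)) (opp (last p))"
    and plump: "plump 2 (nbrs E (last p)) (opp (last p))"
    using veldkamp_ngon_local[OF ngon] by blast+
  show ?thesis
  proof (cases "p ! (n - 1) = z")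
    case True
    then show ?thesis using p by blast
  next
    case False
    have "{p ! (n - 1), z} \<subseteq> nbrs E (last p)" "card {p ! (n - 1), z} \<le> 2"
      using pen z by (auto simp: card_insert_if)
    then have "\<exists>w\<in>nbrs E (last p). \<forall>u\<in>{p ! (n - 1), z}. opp (last p) w u"
      using plump unfolding plump_def by blast
    then obtain w where w: "w \<in> nbrs E (last p)" "opp (last p) w (p ! (n - 1))" "opp (last p) w z"
      by auto
    have "opp (last p) (p ! (n - 1)) w" using rel w(2) unfolding opposition_rel_def by blast
    then obtain R where R: "root n V E opp R" "hd R = hd p" "last R = last p" "R ! (n - 1) = w"
      using root_turn_penultimate[OF ngon p w(1)] by blast
    show ?thesis using root_turn_penultimate[OF ngon R(1)] R z w(3) by simp
  qed
qed

lemma root_eq_if_penultimate_eq: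
  assumes ngon: "veldkamp_ngon n V E opp" and p: "root n V E opp p" and q: "root n V E opp q"
    and "hd p = hd q" "last p = last q" "p ! (n - 1) = q ! (n - 1)"
  shows "p = q"
proof -
  have n: "2 \<le> n" using veldkamp_ngon_ge_2[OF ngon] .
  have lp: "length p = n + 1" and p_path: "is_path V E p" and p_straight: "straight opp p"
    and lq: "length q = n + 1" and q_path: "is_path V E q" and q_straight: "straight opp q"
    using p q unfolding root_def s_path_def by auto
  have "butlast q = butlast p"
  proof (rule veldkamp_ngon_straight_path_unique[OF ngon, of "n - 1"])
    show "s_path V E (n - 1) (butlast p)" unfolding s_path_def
      using is_path_butlast[OF p_path] lp n by simp
    show "is_path V E (butlast q)" using is_path_butlast[OF q_path] lq n by simp
    show "hd (butlast q) = hd (butlast p)" using assms(4) lp lq n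
      by (simp add: butlast_conv_take)
    have "last (butlast xs) = xs ! (n - 1)" if "length xs = n + 1" for xs :: "'a list"
      using that n by (subst last_conv_nth) (auto simp: nth_butlast dest: arg_cong[of _ _ length])
    then show "last (butlast q) = last (butlast p)" using assms(6) lp lq by simp
  qed (use n lq p_straight q_straight straight_butlast in auto)
  moreover have "p \<noteq> []" "q \<noteq> []" using lp lq by auto
  ultimately show ?thesis using assms(5) by (metis append_butlast_last_id)
qed

theorem proposition2p10:
  fixes n :: nat and V :: "'a set" and E :: "'a set set" and opp :: "'a \<Rightarrow> 'a \<Rightarrow> 'a \<Rightarrow> bool"
  assumes "n \<ge> 2"
    and "veldkamp_ngon n V E opp"
    and "x \<in> V" and "y \<in> V"
    and "opposite n V E opp x y"
    and "z \<in> nbrs E y"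
  shows "\<exists>!p. root n V E opp p \<and> hd p = x \<and> last p = y \<and> p ! (n - 1) = z"
proof -
  obtain p where "root n V E opp p" "hd p = x" "last p = y"
    using assms(5) unfolding opposite_def by blast
  then have "\<exists>R. root n V E opp R \<and> hd R = x \<and> last R = y \<and> R ! (n - 1) = z"
    using root_with_penultimate_exists[OF assms(2)] assms(6) by blast
  then show ?thesis
    by (rule ex_ex1I) (use root_eq_if_penultimate_eq[OF assms(2)] in \<open>metis (no_types)\<close>)
qed

end
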